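(* Fix any total budget $\mathrm{TB}\in\mathbb N_0$. If $G$ is a number game, then (for any budget state) both Left and Right optimally play $0$-bid strategies in $G$, i.e. bidding $0$ is optimal for each player at every follower of $G$.
   Context: Game forms are defined recursively: $G=\{G^{\mathcal L}\mid G^{\mathcal R}\}$ with finite sets of Left and Right options, and finite birthday. A follower of $G$ is a game form reachable from $G$ by a possibly empty sequence of moves. The budget set for total budget $\mathrm{TB}$ is $\mathcal B=\{0,\dots,\mathrm{TB},\hat 0,\dots,\widehat{\mathrm{TB}}\}$: state $p$ (resp. $\hat p$) means Left holds $p$ dollars and Right holds $\mathrm{TB}-p$, and Right (resp. Left) holds the tie-breaking marker. Play of $(G,\tilde p)$: at every position (terminal ones included) both players bid simultaneously, Left $\ell\in\{0,\dots,p\}$, Right $r\in\{0,\dots,\mathrm{TB}-p\}$. If Left holds the marker (state $\hat p$): if $\ell>r$ Left moves to $(G^L,\widehat{p-\ell})$, or, including the marker (allowed when $\ell\ge r$), to $(G^L,p-\ell)$; if $\ell=r$ Left wins, the marker passes to Right, play continues at $(G^L,p-\ell)$; if $\ell<r$ Right moves to $(G^R,\widehat{p+r})$. Symmetrically when Right holds the marker (state $p$): if $r>\ell$ Right moves to $(G^R,p+r)$ or, including the marker, to $(G^R,\widehat{p+r})$; if $r=\ell$ Right wins, the marker passes to Left, play continues at $(G^R,\widehat{p+r})$; if $r<\ell$ Left moves to $(G^L,p-\ell)$. A player who wins a bid but has no option loses. $o(G,\tilde p)\in\{\mathrm L,\mathrm R\}$ is the winner under optimal play. Disjunctive sum $G+H=\{G^{\mathcal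 L}+H,G+H^{\mathcal L}\mid G^{\mathcal R}+H,G+H^{\mathcal R}\}$. $G\ge H$ means $o(G+X,\tilde p)\ge o(H+X,\tilde p)$ for all game forms $X$ and all $\tilde p\in\mathcal B$ (with $\mathrm L>\mathrm R$); $G>H$ means $G\ge H$ and not $H\ge G$. A game form $G$ is a number if all its options are numbers and $G^L<G<G^R$ for all $G^L\in G^{\mathcal L}$, $G^R\in G^{\mathcal R}$. *)

theory Defs
  imports Main "HOL-Library.FSet"
begin

text \<open>A game form: finite sets of Left and Right options; finite birthday is
automatic for an inductive datatype.\<close>
datatype game = Game (lopts: "game fset") (ropts: "game fset")

lemma size_fset_mem: "g |\<in>| A \<Longrightarrow> size g < size_fset size A"
proof -
  assume "g |\<in>| A"
  then have "Suc (size g) \<le> (\<Sum>x\<in>fset A. Suc (size x))"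
    by (intro member_le_sum) auto
  then show ?thesis by simp
qed

lemma size_lopts: "g |\<in>| lopts G \<Longrightarrow> size g < size G"
  by (cases G) (auto dest: size_fset_mem)
lemma size_ropts: "g |\<in>| ropts G \<Longrightarrow> size g < size G"
  by (cases G) (auto dest: size_fset_mem)

function plus_game :: "game \<Rightarrow> game \<Rightarrow> game" where
  "plus_game G H =
     Game ((\<lambda>g. plus_game g H) |`| lopts G |\<union>| (\<lambda>h. plus_game G h) |`| lopts H)
          ((\<lambda>g. plus_game g H) |`| ropts G |\<union>| (\<lambda>h. plus_game G h) |`| ropts H)"
  by auto
termination
  by (relation "measure (\<lambda>(G, H). size G + size H)")
     (auto dest: size_lopts size_ropts)


text \<open>Budget state: a pair (p, m) with p \<le> TB; m = True encodes the state
\<open>p\<close>-hat (Left holds the tie-breaking marker), m = False the state p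
(Right holds the marker).  Left holds p dollars, Right holds TB - p.\<close>

definition budget_states :: "nat \<Rightarrow> (nat \<times> bool) set" where
  "budget_states TB = {(p, m). p \<le> TB}"

definition left_wins_bid :: "bool \<Rightarrow> nat \<Rightarrow> nat \<Rightarrow> bool" where
  "left_wins_bid m l r = (if m then r \<le> l else r < l)"

text \<open>Marker flags that the winner of the bid may choose for the next state.
Left winning with the marker: if l > r Left may keep it or include it; if
l = r it passes to Right.  Left winning without the marker: stays with Right.
Symmetrically for Right.\<close>
definition left_marker_choices :: "bool \<Rightarrow> nat \<Rightarrow> nat \<Rightarrow> bool set" where
  "left_marker_choices m l r = (if m \<and> r < l then {True, False} else {False})"

definition right_marker_choices :: "bool \<Rightarrow> nat \<Rightarrow> nat \<Rightarrow> bool set" where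
  "right_marker_choices m l r = (if \<not> m \<and> l < r then {True, False} else {True})"

text \<open>Result (True = Left wins) of one bidding round given the outcome
functions of the Left options LO and the Right options RO.  The bid winner
moves (paying its bid to the opponent) and chooses the option and the
allowed marker placement; a bid winner without options loses.\<close>
definition resolve ::
  "(nat \<Rightarrow> bool \<Rightarrow> bool) fset \<Rightarrow> (nat \<Rightarrow> bool \<Rightarrow> bool) fset \<Rightarrow> nat \<Rightarrow> bool \<Rightarrow> nat \<Rightarrow> nat \<Rightarrow> bool"
where
  "resolve LO RO p m l r =
     (if left_wins_bid m l r
      then (\<exists>w\<in>fset LO. \<exists>m'\<in>left_marker_choices m l r. w (p - l) m')
      else (\<forall>w\<in>fset RO. \<forall>m'\<in>right_marker_choices m l r. w (p + r) m'))"

primrec outc :: "nat \<Rightarrow> game \<Rightarrow> nat \<Rightarrow> bool \<Rightarrow> bool" where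
  "outc TB (Game GL GR) =
     (\<lambda>p m. \<exists>l\<le>p. \<forall>r\<le>TB - p. resolve (outc TB |`| GL) (outc TB |`| GR) p m l r)"

definition round_val :: "nat \<Rightarrow> game \<Rightarrow> nat \<Rightarrow> bool \<Rightarrow> nat \<Rightarrow> nat \<Rightarrow> bool" where
  "round_val TB G p m l r = resolve (outc TB |`| lopts G) (outc TB |`| ropts G) p m l r"

definition game_ge :: "nat \<Rightarrow> game \<Rightarrow> game \<Rightarrow> bool" where
  "game_ge TB G H = (\<forall>X p m. (p, m) \<in> budget_states TB \<longrightarrow>
      (outc TB (plus_game H X) p m \<longrightarrow> outc TB (plus_game G X) p m))"

definition game_gt :: "nat \<Rightarrow> game \<Rightarrow> game \<Rightarrow> bool" where
  "game_gt TB G H = (game_ge TB G H \<and> \<not> game_ge TB H G)"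

inductive is_number :: "nat \<Rightarrow> game \<Rightarrow> bool" for TB where
  "\<lbrakk>\<forall>g\<in>fset (lopts G). is_number TB g; \<forall>g\<in>fset (ropts G). is_number TB g;
    \<forall>g\<in>fset (lopts G). game_gt TB G g; \<forall>g\<in>fset (ropts G). game_gt TB g G\<rbrakk>
   \<Longrightarrow> is_number TB G"

inductive follower :: "game \<Rightarrow> game \<Rightarrow> bool" where
  refl: "follower G G"
| step: "\<lbrakk>follower G H; H' \<in> fset (lopts H) \<union> fset (ropts H)\<rbrakk> \<Longrightarrow> follower G H'"

definition zero_opt_left :: "nat \<Rightarrow> game \<Rightarrow> nat \<Rightarrow> bool \<Rightarrow> bool" where
  "zero_opt_left TB H p m =
     (outc TB H p m \<longrightarrow> (\<forall>r\<le>TB - p. round_val TB H p m 0 r))"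

definition zero_opt_right :: "nat \<Rightarrow> game \<Rightarrow> nat \<Rightarrow> bool \<Rightarrow> bool" where
  "zero_opt_right TB H p m =
     (\<not> outc TB H p m \<longrightarrow> (\<forall>l\<le>p. \<not> round_val TB H p m l 0))"

end

theory Submission
  imports Defs
begin

(* For a number G the outcome does not depend on the budget: Left wins (G, p~) iff Left wins
   G in normal play when the marker holder moves first.  This goes by induction on G with an
   inner induction on the budget, whose step shows directly that a 0-bid wins.  Suppose the
   normal-play outcome is a Left win and Left bids 0.  A tie is won by the marker holder, who
   moves and hands the marker over, exactly as in normal play; the options' outcomes are
   budget-free by induction.  If Right overbids with r > 0, Left ends up with budget p + r, at
   which G is already a Left win (downward induction on p), and G < G^R carries that win over
   to every Right option.  Right's 0-bid is symmetric, by upward induction on p. *)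

declare plus_game.simps [simp del]

definition zero_game :: game where
  "zero_game = Game {||} {||}"

lemma plus_game_zero_right: "plus_game G zero_game = G"
proof (induction G rule: measure_induct_rule[where f = size])
  case (less G)
  obtain GL GR where G: "G = Game GL GR" by (cases G)
  have "(\<lambda>g. plus_game g zero_game) |`| GL = GL"
    by (rule fset.map_ident_strong) (metis less G size_lopts game.sel(1))
  moreover have "(\<lambda>g. plus_game g zero_game) |`| GR = GR"
    by (rule fset.map_ident_strong) (metis less G size_ropts game.sel(2))
  ultimately show ?case using G by (subst plus_game.simps) (simp add: zero_game_def)
qed

lemma game_ge_outc_mono:
  assumes "game_ge TB G H" "p \<le> TB" "outc TB H p m"
  shows "outc TB G p m"
  using assms(1)[unfolded game_ge_def, rule_format, of p m zero_game] assms(2,3)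
  by (simp add: plus_game_zero_right budget_states_def)

lemma game_gt_outc_mono:
  "game_gt TB G H \<Longrightarrow> p \<le> TB \<Longrightarrow> outc TB H p m \<Longrightarrow> outc TB G p m"
  unfolding game_gt_def by (blast intro: game_ge_outc_mono)

lemma is_number_optionsD:
  assumes "is_number TB H"
  shows "g \<in> fset (lopts H) \<Longrightarrow> is_number TB g \<and> game_gt TB H g"
    and "g \<in> fset (ropts H) \<Longrightarrow> is_number TB g \<and> game_gt TB g H"
  using assms by (auto elim: is_number.cases)

lemma outc_eq_round_val:
  "outc TB H p m = (\<exists>l\<le>p. \<forall>r\<le>TB - p. round_val TB H p m l r)"
  by (cases H) (simp add: round_val_def)

lemma round_val_eq:
  "round_val TB H p m l r =
     (if left_wins_bid m l r
      then \<exists>g\<in>fset (lopts H). \<exists>m'\<in>left_marker_choices m l r. outc TB g (p - l) m'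
      else \<forall>g\<in>fset (ropts H). \<forall>m'\<in>right_marker_choices m l r. outc TB g (p + r) m')"
  by (simp add: round_val_def resolve_def fimage.rep_eq)

lemmas round_val_simps =
  round_val_eq left_wins_bid_def left_marker_choices_def right_marker_choices_def

text \<open>Normal-play outcome of a game; the flag says whether Left moves first, in line with the
  marker flag of budget states (with both bids 0 the marker holder moves).\<close>
primrec normal_outcome :: "game \<Rightarrow> bool \<Rightarrow> bool" where
  "normal_outcome (Game GL GR) =
     (\<lambda>m. if m then \<exists>w\<in>fset (normal_outcome |`| GL). w False
          else \<forall>w\<in>fset (normal_outcome |`| GR). w True)"

lemma normal_outcome_left_first:
  "normal_outcome H True = (\<exists>g\<in>fset (lopts H). normal_outcome g False)"
  by (cases H) (simp add: fimage.rep_eq)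

lemma normal_outcome_right_first:
  "normal_outcome H False = (\<forall>g\<in>fset (ropts H). normal_outcome g True)"
  by (cases H) (simp add: fimage.rep_eq)

lemma left_zero_bid_wins:
  assumes opts: "\<And>g q m'. g \<in> fset (lopts H) \<union> fset (ropts H) \<Longrightarrow> q \<le> TB \<Longrightarrow>
                   outc TB g q m' = normal_outcome g m'"
    and right_gt: "\<And>g. g \<in> fset (ropts H) \<Longrightarrow> game_gt TB g H"
    and richer: "\<And>q. p < q \<Longrightarrow> q \<le> TB \<Longrightarrow> outc TB H q m"
    and win: "normal_outcome H m" and "p \<le> TB" "r \<le> TB - p"
  shows "round_val TB H p m 0 r"
proof (cases "r = 0")
  case True
  show ?thesis
  proof (cases m)
    case True
    then obtain g where "g \<in> fset (lopts H)" "normal_outcome g False"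
      using win by (auto simp: normal_outcome_left_first)
    then show ?thesis using True \<open>r = 0\<close> opts[of g p False] \<open>p \<le> TB\<close>
      by (auto simp: round_val_simps)
  next
    case False
    then have "outc TB g p True" if "g \<in> fset (ropts H)" for g
      using win that opts[of g p True] \<open>p \<le> TB\<close> by (simp add: normal_outcome_right_first)
    then show ?thesis using False \<open>r = 0\<close> by (simp add: round_val_simps)
  qed
next
  case False
  then have "outc TB g (p + r) m" if "g \<in> fset (ropts H)" for g
    using game_gt_outc_mono[OF right_gt[OF that], of "p + r"] richer[of "p + r"] \<open>r \<le> TB - p\<close>
    by simp
  moreover have "outc TB g (p + r) True" if "\<not> m" "g \<in> fset (ropts H)" for g
    using that win opts[of g "p + r" True] \<open>r \<le> TB - p\<close> \<open>p \<le> TB\<close>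
    by (simp add: normal_outcome_right_first)
  ultimately show ?thesis using False
    by (cases m) (auto simp: round_val_simps)
qed

lemma right_zero_bid_wins:
  assumes opts: "\<And>g q m'. g \<in> fset (lopts H) \<union> fset (ropts H) \<Longrightarrow> q \<le> TB \<Longrightarrow>
                   outc TB g q m' = normal_outcome g m'"
    and left_gt: "\<And>g. g \<in> fset (lopts H) \<Longrightarrow> game_gt TB H g"
    and poorer: "\<And>q. q < p \<Longrightarrow> \<not> outc TB H q m"
    and loss: "\<not> normal_outcome H m" and "p \<le> TB" "l \<le> p"
  shows "\<not> round_val TB H p m l 0"
proof (cases "l = 0")
  case True
  show ?thesis
  proof (cases m)
    case True
    then have "\<not> outc TB g p False" if "g \<in> fset (lopts H)" for g
      using loss that opts[of g p False] \<open>p \<le> TB\<close> by (simp add: normal_outcome_left_first)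
    then show ?thesis using True \<open>l = 0\<close> by (simp add: round_val_simps)
  next
    case False
    then obtain g where "g \<in> fset (ropts H)" "\<not> normal_outcome g True"
      using loss by (auto simp: normal_outcome_right_first)
    then show ?thesis using False \<open>l = 0\<close> opts[of g p True] \<open>p \<le> TB\<close>
      by (auto simp: round_val_simps)
  qed
next
  case False
  then have "\<not> outc TB g (p - l) m" if "g \<in> fset (lopts H)" for g
    using game_gt_outc_mono[OF left_gt[OF that], of "p - l"] poorer[of "p - l"]
      \<open>l \<le> p\<close> \<open>p \<le> TB\<close>
    by fastforce
  moreover have "\<not> outc TB g (p - l) False" if m "g \<in> fset (lopts H)" for g
    using that loss opts[of g "p - l" False] \<open>l \<le> p\<close> \<open>p \<le> TB\<close>
    by (simp add: normal_outcome_left_first)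
  ultimately show ?thesis using False
    by (cases m) (auto simp: round_val_simps)
qed

lemma number_outc_eq_normal_outcome:
  assumes "is_number TB G" and "p \<le> TB"
  shows "outc TB G p m = normal_outcome G m"
  using assms
proof (induction G arbitrary: p m rule: is_number.induct)
  case (1 G)
  have opts: "outc TB g q m' = normal_outcome g m'"
    if "g \<in> fset (lopts G) \<union> fset (ropts G)" "q \<le> TB" for g q m'
    using that "1.IH" by blast
  note left_gt = "1.hyps"(1)[rule_format] and right_gt = "1.hyps"(2)[rule_format]
  have win: "outc TB G q m" if "normal_outcome G m" "q \<le> TB" for q
    using that(2)
  proof (induction "TB - q" arbitrary: q rule: less_induct)
    case less
    have "round_val TB G q m 0 r" if "r \<le> TB - q" for r
      by (rule left_zero_bid_wins[OF opts right_gt])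
        (use less \<open>normal_outcome G m\<close> that in auto)
    then show ?case by (auto simp: outc_eq_round_val)
  qed
  have loss: "\<not> outc TB G q m" if "\<not> normal_outcome G m" "q \<le> TB" for q
    using that(2)
  proof (induction q rule: less_induct)
    case (less q)
    have "\<not> round_val TB G q m l 0" if "l \<le> q" for l
      by (rule right_zero_bid_wins[OF opts left_gt])
        (use less \<open>\<not> normal_outcome G m\<close> that in auto)
    then show ?case by (auto simp: outc_eq_round_val)
  qed
  show ?case using win loss \<open>p \<le> TB\<close> by blast
qed

lemma is_number_follower: "follower G H \<Longrightarrow> is_number TB G \<Longrightarrow> is_number TB H"
  by (induction rule: follower.induct) (auto dest: is_number_optionsD)

lemma number_zero_bids_optimal:
  assumes "is_number TB H" and "p \<le> TB"
  shows "zero_opt_left TB H p m \<and> zero_opt_right TB H p m"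
proof -
  have opts: "outc TB g q m' = normal_outcome g m'"
    if "g \<in> fset (lopts H) \<union> fset (ropts H)" "q \<le> TB" for g q m'
    using that is_number_optionsD[OF assms(1)] number_outc_eq_normal_outcome by blast
  note left_gt = conjunct2[OF is_number_optionsD(1)[OF assms(1)]]
    and right_gt = conjunct2[OF is_number_optionsD(2)[OF assms(1)]]
  have budget_free: "outc TB H q m = normal_outcome H m" if "q \<le> TB" for q
    using assms(1) that by (rule number_outc_eq_normal_outcome)
  have "zero_opt_left TB H p m"
    unfolding zero_opt_left_def
  proof (intro impI allI)
    fix r assume "outc TB H p m" "r \<le> TB - p"
    then show "round_val TB H p m 0 r"
      using budget_free \<open>p \<le> TB\<close> by (intro left_zero_bid_wins[OF opts right_gt]) auto
  qed
  moreover have "zero_opt_right TB H p m"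
    unfolding zero_opt_right_def
  proof (intro impI allI)
    fix l assume "\<not> outc TB H p m" "l \<le> p"
    then show "\<not> round_val TB H p m l 0"
      using budget_free \<open>p \<le> TB\<close> by (intro right_zero_bid_wins[OF opts left_gt]) auto
  qed
  ultimately show ?thesis ..
qed

theorem mainTheorem5:
  fixes TB :: nat and G :: game
  assumes "is_number TB G"
  shows "\<forall>H p m. follower G H \<longrightarrow> (p, m) \<in> budget_states TB \<longrightarrow>
           zero_opt_left TB H p m \<and> zero_opt_right TB H p m"
  using assms is_number_follower number_zero_bids_optimal by (auto simp: budget_states_def)

end
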